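(* Let $\gamma>0$, $b\ge0$, $t_0\in\mathbb{R}$, and let $\beta\ge0$ be arbitrary. Let $w_n$ ($n\ge0$) be defined on $[0,\infty)\times\mathbb{R}$ by $w_n(x_3,t)=0$ for $t\le t_0$ and, for $t>t_0$, \[ w_0(x_3,t)=\frac{1}{4(\pi\gamma)^{3/2}\sqrt{t-t_0}}e^{-\frac{x_3^2}{4\gamma(t-t_0)}},\qquad w_n(x_3,t)=\frac{-\beta}{\sqrt{\pi\gamma}}\int_{t_0}^t\frac{w_{n-1}(0,s)}{\sqrt{t-s}}e^{-\frac{x_3^2}{4\gamma(t-s)}}\,ds\ \ (n\ge1). \] Then the series $\sum_{n=0}^\infty w_n(x_3,t)$ converges absolutely and locally uniformly on $[0,\infty)\times(t_0,\infty)$. Consequently the series $\sum_{n=0}^\infty v_n(x,t)$ with $v_n(x,t)=\frac{e^{-b(t-t_0)}}{t-t_0}e^{-\frac{x_1^2+x_2^2}{4\gamma(t-t_0)}}w_n(x_3,t)$ converges absolutely and locally uniformly on $\overline{\mathbb{R}^3_+}\times(t_0,\infty)$, regardless of the value of $\beta$.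
   Context: $\overline{\mathbb{R}^3_+}=\{x\in\mathbb{R}^3:x_3\ge0\}$. The $v_n$ are the terms of the Born series (Robin impedance term $\beta u$ treated as a perturbation of the Neumann problem) for the half-space diffusion equation $(\partial_t-\gamma\Delta+b)u=0$ with boundary condition $\gamma\partial_\nu u+\beta u=\delta(x_1)\delta(x_2)\delta(t-t_0)$. *)

theory Defs
  imports "HOL-Analysis.Analysis"
begin

primrec bornW :: "real \<Rightarrow> real \<Rightarrow> real \<Rightarrow> nat \<Rightarrow> real \<Rightarrow> real \<Rightarrow> real" where
  "bornW \<gamma> \<beta> t0 0 x3 t =
     (if t \<le> t0 then 0
      else 1 / (4 * (pi * \<gamma>) powr (3/2) * sqrt (t - t0)) * exp (- (x3^2) / (4 * \<gamma> * (t - t0))))"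
| "bornW \<gamma> \<beta> t0 (Suc n) x3 t =
     (if t \<le> t0 then 0
      else (- \<beta> / sqrt (pi * \<gamma>)) *
        (LBINT s=t0..t. bornW \<gamma> \<beta> t0 n 0 s / sqrt (t - s) * exp (- (x3^2) / (4 * \<gamma> * (t - s)))))"

definition bornV :: "real \<Rightarrow> real \<Rightarrow> real \<Rightarrow> real \<Rightarrow> nat \<Rightarrow> real^3 \<Rightarrow> real \<Rightarrow> real" where
  "bornV \<gamma> b \<beta> t0 n x t =
     exp (- b * (t - t0)) / (t - t0) * exp (- ((x$1)^2 + (x$2)^2) / (4 * \<gamma> * (t - t0)))
       * bornW \<gamma> \<beta> t0 n (x$3) t"

text \<open>A series of real functions converges absolutely (pointwise) and locally uniformly on D:
  pointwise absolute summability, and uniform convergence of the partial sums on every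
  compact subset of D (D is locally compact here).\<close>
definition abs_loc_unif_series :: "(nat \<Rightarrow> 'a::metric_space \<Rightarrow> real) \<Rightarrow> 'a set \<Rightarrow> bool" where
  "abs_loc_unif_series f D \<longleftrightarrow>
     (\<forall>p\<in>D. summable (\<lambda>n. \<bar>f n p\<bar>)) \<and>
     (\<forall>K. compact K \<and> K \<subseteq> D \<longrightarrow>
        uniform_limit K (\<lambda>N p. \<Sum>n<N. f n p) (\<lambda>p. \<Sum>n. f n p) sequentially)"

end

theory Submission
  imports Defs
begin

text \<open>By induction on \<open>n\<close>, \<open>|w\<^sub>n(x\<^sub>3,t)| \<le> M\<^sub>n (t - t\<^sub>0)\<^bsup>(n-1)/2\<^esup>\<close>: the Gaussian factors are
  at most 1, and integrating \<open>(s - t\<^sub>0)\<^bsup>(n-1)/2\<^esup> (t - s)\<^bsup>-1/2\<^esup>\<close> over \<open>(t\<^sub>0,t)\<close> is a Beta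
  integral, so \<open>M\<^sub>n\<^sub>+\<^sub>1 = \<beta>/\<surd>(\<pi>\<gamma>) B((n+1)/2, 1/2) M\<^sub>n\<close>, which telescopes to
  \<open>M\<^sub>n = (\<beta>/\<surd>\<gamma>)\<^sup>n / (4\<pi>\<gamma>\<^bsup>3/2\<^esup> \<Gamma>((n+1)/2))\<close>. The Gamma function in the denominator makes
  \<open>\<Sum> M\<^sub>n T\<^bsup>n/2\<^esup>\<close> converge for every \<open>T\<close> and every \<open>\<beta>\<close>, so the Weierstrass M-test applies on
  every strip \<open>t\<^sub>0 < lo \<le> t \<le> hi\<close>; the factor turning \<open>w\<^sub>n\<close> into \<open>v\<^sub>n\<close> is at most \<open>1/(t - t\<^sub>0)\<close>.\<close>

lemma summable_of_two_step_decay: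
  fixes u :: "nat \<Rightarrow> real"
  assumes nonneg: "\<And>n. 0 \<le> u n" and r: "0 < r" "r < 1"
    and decay: "\<And>n. n \<ge> N \<Longrightarrow> u (Suc (Suc n)) \<le> r\<^sup>2 * u n"
  shows "summable u"
proof -
  define D where "D = Max ((\<lambda>n. u n / r ^ n) ` {..Suc N})"
  have bound: "u n \<le> D * r ^ n" for n
  proof (induction n rule: less_induct)
    case (less n)
    show ?case
    proof (cases "n \<le> Suc N")
      case True
      then have "u n / r ^ n \<le> D" unfolding D_def by (intro Max_ge) auto
      then show ?thesis using r by (simp add: divide_le_eq)
    next
      case False
      define m where "m = n - 2"
      have n: "n = Suc (Suc m)" and m: "m \<ge> N" using False unfolding m_def by auto
      have "u n \<le> r\<^sup>2 * u m" using decay m n by simp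
      also have "\<dots> \<le> r\<^sup>2 * (D * r ^ m)" using less.IH[of m] n by (intro mult_left_mono) auto
      also have "\<dots> = D * r ^ n" using n by (simp add: power2_eq_square)
      finally show ?thesis .
    qed
  qed
  have "summable (\<lambda>n. D * r ^ n)" using r by (intro summable_mult summable_geometric) simp
  then show ?thesis by (rule summable_comparison_test[rotated]) (use bound nonneg in auto)
qed

lemma summable_power_div_Gamma_half:
  fixes K :: real
  assumes "K \<ge> 0"
  shows "summable (\<lambda>n. K ^ n / Gamma ((real n + 1) / 2))"
proof -
  obtain N :: nat where N: "8 * K\<^sup>2 \<le> real N" using real_arch_simple by blast
  show ?thesis
  proof (rule summable_of_two_step_decay)
    fix n assume n: "n \<ge> N"
    have pos: "(real n + 1) / 2 > 0" by simp
    then have "(real n + 1) / 2 \<notin> \<int>\<^sub>\<le>\<^sub>0" by auto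
    from Gamma_plus1[OF this]
    have G: "Gamma ((real (Suc (Suc n)) + 1) / 2) = (real n + 1) / 2 * Gamma ((real n + 1) / 2)"
      by (simp add: add_divide_distrib)
    have "8 * K\<^sup>2 \<le> real n + 1" using N n by linarith
    then have "2 * K\<^sup>2 / (real n + 1) \<le> (1/2)\<^sup>2" by (simp add: field_simps)
    moreover have "K ^ Suc (Suc n) / Gamma ((real (Suc (Suc n)) + 1) / 2)
        = 2 * K\<^sup>2 / (real n + 1) * (K ^ n / Gamma ((real n + 1) / 2))"
      unfolding G using pos Gamma_real_pos[OF pos] by (simp add: field_simps power2_eq_square)
    ultimately show "K ^ Suc (Suc n) / Gamma ((real (Suc (Suc n)) + 1) / 2)
        \<le> (1/2)\<^sup>2 * (K ^ n / Gamma ((real n + 1) / 2))"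
      using assms pos by (metis Gamma_real_nonneg divide_nonneg_nonneg mult_right_mono zero_le_power)
  qed (use assms in auto)
qed

lemma has_integral_Beta_real_interval:
  fixes a b x y :: real
  assumes ab: "a < b" and xy: "x > 0" "y > 0"
  shows "((\<lambda>s. (s - a) powr (x - 1) * (b - s) powr (y - 1)) has_integral
           (b - a) powr (x + y - 1) * Beta x y) {a..b}"
proof -
  define l where "l = b - a"
  have l: "l > 0" using ab unfolding l_def by simp
  define h where "h u = u powr (x - 1) * (1 - u) powr (y - 1)" for u :: real
  have "(h has_integral Beta x y) (cbox 0 1)"
    using has_integral_Beta_real[OF xy] unfolding h_def by (simp add: cbox_interval)
  then have aff: "((\<lambda>s. h ((1 / l) *\<^sub>R s + - a / l)) has_integral Beta x y /\<^sub>R (1 / l) ^ DIM(real))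
               (cbox ((0 - - a / l) /\<^sub>R (1 / l)) ((1 - - a / l) /\<^sub>R (1 / l)))"
    using l by (intro has_integral_affinity') simp_all
  have dom: "cbox ((0 - - a / l) /\<^sub>R (1 / l)) ((1 - - a / l) /\<^sub>R (1 / l)) = {a..b}"
    using l unfolding l_def by (simp add: cbox_interval field_simps)
  have arg: "(\<lambda>s. h ((1 / l) *\<^sub>R s + - a / l)) = (\<lambda>s. h ((s - a) / l))"
    by (simp add: diff_divide_distrib)
  have "((\<lambda>s. h ((s - a) / l)) has_integral l * Beta x y) {a..b}"
    using aff unfolding dom arg by simp
  then have "((\<lambda>s. l powr (x + y - 2) * h ((s - a) / l)) has_integral
               l powr (x + y - 2) * (l * Beta x y)) {a..b}"
    by (rule has_integral_mult_right)
  moreover have "l powr (x + y - 2) * (l * Beta x y) = l powr (x + y - 1) * Beta x y"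
    using powr_add[of l "x + y - 2" 1] l by (simp add: mult.assoc[symmetric])
  moreover have "l powr (x + y - 2) * h ((s - a) / l) = (s - a) powr (x - 1) * (b - s) powr (y - 1)"
    if "s \<in> {a..b}" for s
  proof -
    have "1 - (s - a) / l = (b - s) / l" using l unfolding l_def by (simp add: field_simps)
    then have "h ((s - a) / l) = (s - a) powr (x - 1) * (b - s) powr (y - 1) / l powr (x + y - 2)"
      using that l by (simp add: h_def powr_divide powr_add[symmetric])
    then show ?thesis using l by simp
  qed
  ultimately show ?thesis unfolding l_def by (auto intro: has_integral_eq[rotated])
qed

lemma abs_interval_integral_le:
  fixes f g :: "real \<Rightarrow> real"
  assumes ab: "a \<le> b" and g: "(g has_integral I) {a..b}"
    and g_nonneg: "\<And>s. s \<in> {a..b} \<Longrightarrow> 0 \<le> g s"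
    and f_le: "\<And>s. a < s \<Longrightarrow> s < b \<Longrightarrow> \<bar>f s\<bar> \<le> g s"
  shows "\<bar>LBINT s=a..b. f s\<bar> \<le> I"
proof -
  have I: "0 \<le> I" using has_integral_nonneg[OF g g_nonneg] .
  define F where "F s = indicator {a<..<b} s *\<^sub>R f s" for s
  have LF: "(LBINT s=a..b. f s) = integral\<^sup>L lborel F"
    unfolding F_def using ab by (simp add: interval_integral_Ioo set_lebesgue_integral_def)
  show ?thesis
  proof (cases "integrable lborel F")
    case True
    have "ennreal \<bar>integral\<^sup>L lborel F\<bar> \<le> (\<integral>\<^sup>+s. norm (F s) \<partial>lborel)"
      using integral_norm_bound_ennreal[OF True] by simp
    also have "\<dots> \<le> (\<integral>\<^sup>+s. ennreal (g s) * indicator {a..b} s \<partial>lborel)"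
      using f_le by (intro nn_integral_mono) (auto simp: F_def indicator_def intro!: ennreal_leI)
    also have "\<dots> = ennreal I" by (rule nn_integral_has_integral_lebesgue'[OF g_nonneg g])
    finally show ?thesis unfolding LF using I by simp
  next
    case False
    \<comment> \<open>no measurability of \<open>f\<close> is needed: a non-integrable integrand has Bochner integral 0\<close>
    then show ?thesis unfolding LF using I by (simp add: not_integrable_integral_eq)
  qed
qed

lemma powr_minus_half: "0 \<le> x \<Longrightarrow> x powr - (1/2) = 1 / sqrt (x :: real)"
  unfolding powr_minus_divide by (simp add: powr_half_sqrt)

lemma exp_neg_divide_le_one: "0 \<le> q \<Longrightarrow> 0 \<le> d \<Longrightarrow> exp (- q / d) \<le> (1 :: real)"
  using divide_nonneg_nonneg[of q d] by simp

definition born_coeff :: "real \<Rightarrow> real \<Rightarrow> nat \<Rightarrow> real" where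
  "born_coeff \<gamma> \<beta> n = (\<beta> / sqrt \<gamma>) ^ n / (4 * pi * \<gamma> powr (3/2) * Gamma ((real n + 1) / 2))"

lemma born_coeff_nonneg: "\<gamma> > 0 \<Longrightarrow> \<beta> \<ge> 0 \<Longrightarrow> born_coeff \<gamma> \<beta> n \<ge> 0"
  unfolding born_coeff_def by (intro divide_nonneg_pos mult_pos_pos) auto

lemma born_coeff_0:
  assumes "\<gamma> > 0"
  shows "born_coeff \<gamma> \<beta> 0 = 1 / (4 * (pi * \<gamma>) powr (3/2))"
proof -
  have "pi powr (3/2) = pi * sqrt pi"
    using powr_add[of pi 1 "1/2"] by (simp add: powr_half_sqrt)
  then have "(pi * \<gamma>) powr (3/2) = pi * sqrt pi * \<gamma> powr (3/2)"
    using assms by (simp add: powr_mult)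
  then show ?thesis by (simp add: born_coeff_def Gamma_one_half_real mult_ac)
qed

lemma born_coeff_Suc:
  assumes "\<gamma> > 0"
  shows "born_coeff \<gamma> \<beta> (Suc n) =
           \<beta> / sqrt (pi * \<gamma>) * Beta ((real n + 1) / 2) (1/2) * born_coeff \<gamma> \<beta> n"
proof -
  have e: "(real n + 1) / 2 + 1/2 = (real (Suc n) + 1) / 2" by simp
  have B: "Beta ((real n + 1) / 2) (1/2) =
                  Gamma ((real n + 1) / 2) * sqrt pi / Gamma ((real (Suc n) + 1) / 2)"
    unfolding Beta_def Gamma_one_half_real e ..
  have "(\<beta> / sqrt \<gamma>) ^ Suc n / (D * G2) =
          \<beta> / (sqrt pi * sqrt \<gamma>) * (G1 * sqrt pi / G2) * ((\<beta> / sqrt \<gamma>) ^ n / (D * G1))"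
    if "G1 \<noteq> 0" for D G1 G2 :: real
    using that by (simp add: field_simps)
  moreover have "Gamma ((real n + 1) / 2) \<noteq> 0"
    using Gamma_real_pos[of "(real n + 1) / 2"] by fastforce
  ultimately show ?thesis unfolding born_coeff_def B real_sqrt_mult by blast
qed

lemma abs_bornW_le:
  assumes \<gamma>: "\<gamma> > 0" and \<beta>: "\<beta> \<ge> 0"
  shows "t0 < t \<Longrightarrow> \<bar>bornW \<gamma> \<beta> t0 n x3 t\<bar> \<le> born_coeff \<gamma> \<beta> n * (t - t0) powr ((real n - 1) / 2)"
proof (induction n arbitrary: x3 t)
  case 0
  have "\<bar>bornW \<gamma> \<beta> t0 0 x3 t\<bar> =
          1 / (4 * (pi * \<gamma>) powr (3/2) * sqrt (t - t0)) * exp (- (x3\<^sup>2) / (4 * \<gamma> * (t - t0)))"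
    using 0 \<gamma> by simp
  also have "\<dots> \<le> 1 / (4 * (pi * \<gamma>) powr (3/2) * sqrt (t - t0))"
    using 0 \<gamma> by (intro mult_left_le exp_neg_divide_le_one) auto
  also have "\<dots> = born_coeff \<gamma> \<beta> 0 * (t - t0) powr ((real 0 - 1) / 2)"
    using 0 \<gamma> by (simp add: born_coeff_0 powr_minus_half)
  finally show ?case .
next
  case (Suc n)
  define c where "c = born_coeff \<gamma> \<beta> n"
  have c: "c \<ge> 0" unfolding c_def using \<gamma> \<beta> by (rule born_coeff_nonneg)
  let ?x = "(real n + 1) / 2" and ?y = "1/2 :: real"
  define g where "g s = c * ((s - t0) powr (?x - 1) * (t - s) powr (?y - 1))" for s
  have g: "(g has_integral c * ((t - t0) powr (?x + ?y - 1) * Beta ?x ?y)) {t0..t}"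
    unfolding g_def using Suc.prems
    by (intro has_integral_mult_right has_integral_Beta_real_interval) auto
  have integrand_le: "\<bar>bornW \<gamma> \<beta> t0 n 0 s / sqrt (t - s) * exp (- (x3\<^sup>2) / (4 * \<gamma> * (t - s)))\<bar> \<le> g s"
    if "t0 < s" "s < t" for s
  proof -
    have exp_le: "exp (- (x3\<^sup>2) / (4 * \<gamma> * (t - s))) \<le> 1"
      using that \<gamma> by (intro exp_neg_divide_le_one) auto
    have "\<bar>bornW \<gamma> \<beta> t0 n 0 s / sqrt (t - s) * exp (- (x3\<^sup>2) / (4 * \<gamma> * (t - s)))\<bar>
          = \<bar>bornW \<gamma> \<beta> t0 n 0 s\<bar> / sqrt (t - s) * exp (- (x3\<^sup>2) / (4 * \<gamma> * (t - s)))"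
      using that by (simp add: abs_mult)
    also have "\<dots> \<le> \<bar>bornW \<gamma> \<beta> t0 n 0 s\<bar> / sqrt (t - s)"
      using exp_le that by (intro mult_left_le) auto
    also have "\<dots> \<le> c * (s - t0) powr ((real n - 1) / 2) / sqrt (t - s)"
      using Suc.IH[of s 0] that unfolding c_def by (intro divide_right_mono) auto
    also have "\<dots> = g s"
      using that by (simp add: g_def powr_minus_half field_simps)
    finally show ?thesis .
  qed
  have "\<bar>bornW \<gamma> \<beta> t0 (Suc n) x3 t\<bar> =
          \<beta> / sqrt (pi * \<gamma>) *
          \<bar>LBINT s=t0..t. bornW \<gamma> \<beta> t0 n 0 s / sqrt (t - s) * exp (- (x3\<^sup>2) / (4 * \<gamma> * (t - s)))\<bar>"
    using Suc.prems \<gamma> \<beta> by (simp add: abs_mult)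
  also have "\<dots> \<le> \<beta> / sqrt (pi * \<gamma>) * (c * ((t - t0) powr (?x + ?y - 1) * Beta ?x ?y))"
    using Suc.prems \<gamma> \<beta> g integrand_le c
    by (intro mult_left_mono abs_interval_integral_le[where g = g]) (auto simp: g_def)
  also have "\<dots> = born_coeff \<gamma> \<beta> (Suc n) * (t - t0) powr ((real (Suc n) - 1) / 2)"
    unfolding c_def born_coeff_Suc[OF \<gamma>] by (simp add: field_simps)
  finally show ?case .
qed

lemma summable_born_coeff_powr:
  assumes \<gamma>: "\<gamma> > 0" and \<beta>: "\<beta> \<ge> 0" and T: "T > 0"
  shows "summable (\<lambda>n. born_coeff \<gamma> \<beta> n * T powr (real n / 2))"
proof -
  have "T powr (real n / 2) = sqrt T ^ n" for n
    using T by (simp add: powr_half_sqrt[symmetric] powr_powr powr_realpow[symmetric])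
  then have eq: "born_coeff \<gamma> \<beta> n * T powr (real n / 2) =
               (\<beta> * sqrt T / sqrt \<gamma>) ^ n / Gamma ((real n + 1) / 2) / (4 * pi * \<gamma> powr (3/2))" for n
    by (simp add: born_coeff_def power_mult_distrib power_divide)
  show ?thesis
    unfolding eq using \<gamma> \<beta> T by (intro summable_divide summable_power_div_Gamma_half) simp
qed

definition bornW_majorant :: "real \<Rightarrow> real \<Rightarrow> real \<Rightarrow> real \<Rightarrow> real \<Rightarrow> nat \<Rightarrow> real" where
  "bornW_majorant \<gamma> \<beta> t0 lo hi n = born_coeff \<gamma> \<beta> n * (hi - t0) powr (real n / 2) / sqrt (lo - t0)"

lemma summable_bornW_majorant:
  "\<gamma> > 0 \<Longrightarrow> \<beta> \<ge> 0 \<Longrightarrow> t0 < hi \<Longrightarrow> summable (bornW_majorant \<gamma> \<beta> t0 lo hi)"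
  unfolding bornW_majorant_def by (intro summable_divide summable_born_coeff_powr) auto

lemma abs_bornW_le_majorant:
  assumes \<gamma>: "\<gamma> > 0" and \<beta>: "\<beta> \<ge> 0" and t: "t0 < lo" "lo \<le> t" "t \<le> hi"
  shows "\<bar>bornW \<gamma> \<beta> t0 n x3 t\<bar> \<le> bornW_majorant \<gamma> \<beta> t0 lo hi n"
proof -
  have "\<bar>bornW \<gamma> \<beta> t0 n x3 t\<bar> \<le> born_coeff \<gamma> \<beta> n * (t - t0) powr ((real n - 1) / 2)"
    using t by (intro abs_bornW_le[OF \<gamma> \<beta>]) simp
  also have "\<dots> = born_coeff \<gamma> \<beta> n * ((t - t0) powr (real n / 2) / sqrt (t - t0))"
    using t by (simp add: diff_divide_distrib powr_diff powr_half_sqrt)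
  also have "\<dots> \<le> born_coeff \<gamma> \<beta> n * ((hi - t0) powr (real n / 2) / sqrt (lo - t0))"
    using t born_coeff_nonneg[OF \<gamma> \<beta>] by (intro mult_left_mono frac_le powr_mono2) auto
  finally show ?thesis unfolding bornW_majorant_def by simp
qed

lemma abs_bornV_le:
  assumes \<gamma>: "\<gamma> > 0" and b: "b \<ge> 0" and t: "t0 < t"
  shows "\<bar>bornV \<gamma> b \<beta> t0 n x t\<bar> \<le> \<bar>bornW \<gamma> \<beta> t0 n (x$3) t\<bar> / (t - t0)"
proof -
  define P where "P = exp (- b * (t - t0)) * exp (- ((x$1)\<^sup>2 + (x$2)\<^sup>2) / (4 * \<gamma> * (t - t0)))"
  have "exp (- b * (t - t0)) \<le> 1" using b t by simp
  moreover have "exp (- ((x$1)\<^sup>2 + (x$2)\<^sup>2) / (4 * \<gamma> * (t - t0))) \<le> 1"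
    using \<gamma> t by (intro exp_neg_divide_le_one) auto
  ultimately have P: "0 \<le> P" "P \<le> 1" unfolding P_def by (simp_all add: mult_le_one)
  have "\<bar>bornV \<gamma> b \<beta> t0 n x t\<bar> = P * (\<bar>bornW \<gamma> \<beta> t0 n (x$3) t\<bar> / (t - t0))"
    using t P unfolding bornV_def P_def by (simp add: abs_mult)
  also have "\<dots> \<le> \<bar>bornW \<gamma> \<beta> t0 n (x$3) t\<bar> / (t - t0)"
    using P t by (intro mult_left_le_one_le) auto
  finally show ?thesis .
qed

lemma abs_bornV_le_majorant:
  assumes \<gamma>: "\<gamma> > 0" and b: "b \<ge> 0" and \<beta>: "\<beta> \<ge> 0" and t: "t0 < lo" "lo \<le> t" "t \<le> hi"
  shows "\<bar>bornV \<gamma> b \<beta> t0 n x t\<bar> \<le> bornW_majorant \<gamma> \<beta> t0 lo hi n / (lo - t0)"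
proof -
  have "\<bar>bornV \<gamma> b \<beta> t0 n x t\<bar> \<le> \<bar>bornW \<gamma> \<beta> t0 n (x$3) t\<bar> / (t - t0)"
    using \<gamma> b t by (intro abs_bornV_le) auto
  also have "\<dots> \<le> bornW_majorant \<gamma> \<beta> t0 lo hi n / (lo - t0)"
    using abs_bornW_le_majorant[OF \<gamma> \<beta> t] t by (intro frac_le) (auto intro: order_trans[OF abs_ge_zero])
  finally show ?thesis .
qed

lemma abs_loc_unif_seriesI:
  assumes "\<And>K. compact K \<Longrightarrow> K \<subseteq> D \<Longrightarrow> \<exists>M. summable M \<and> (\<forall>n. \<forall>p\<in>K. \<bar>f n p\<bar> \<le> M n)"
  shows "abs_loc_unif_series f D"
  unfolding abs_loc_unif_series_def
proof (intro conjI ballI allI impI)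
  fix p assume "p \<in> D"
  then obtain M where M: "summable M" "\<forall>n. \<forall>q\<in>{p}. \<bar>f n q\<bar> \<le> M n"
    using assms[of "{p}"] compact_sing by (meson empty_subsetI insert_subset)
  show "summable (\<lambda>n. \<bar>f n p\<bar>)"
    using M(1) by (rule summable_comparison_test[rotated]) (use M(2) in simp)
next
  fix K assume "compact K \<and> K \<subseteq> D"
  then obtain M where M: "summable M" "\<forall>n. \<forall>p\<in>K. \<bar>f n p\<bar> \<le> M n"
    using assms by meson
  show "uniform_limit K (\<lambda>N p. \<Sum>n<N. f n p) (\<lambda>p. \<Sum>n. f n p) sequentially"
    by (rule Weierstrass_m_test[OF _ M(1)]) (use M(2) in simp)
qed

lemma compact_subset_times_greaterThan:
  fixes K :: "('a::metric_space \<times> real) set"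
  assumes K: "compact K" "K \<subseteq> A \<times> {t0<..}"
  obtains lo hi where "t0 < lo" "lo \<le> hi" "K \<subseteq> A \<times> {lo..hi}"
proof (cases "K = {}")
  case True
  then show ?thesis by (intro that[of "t0 + 1" "t0 + 1"]) auto
next
  case False
  have compact: "compact (snd ` K)" using K(1) by (intro compact_continuous_image continuous_intros)
  have nonempty: "snd ` K \<noteq> {}" using False by simp
  obtain lo where lo: "lo \<in> snd ` K" "\<And>y. y \<in> snd ` K \<Longrightarrow> lo \<le> y"
    using compact_attains_inf[OF compact nonempty] by blast
  obtain hi where hi: "hi \<in> snd ` K" "\<And>y. y \<in> snd ` K \<Longrightarrow> y \<le> hi"
    using compact_attains_sup[OF compact nonempty] by blast
  show ?thesis
  proof (rule that)
    show "t0 < lo" using lo(1) K(2) by auto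
    show "lo \<le> hi" using lo(2)[OF hi(1)] .
    show "K \<subseteq> A \<times> {lo..hi}"
    proof
      fix p assume "p \<in> K"
      then show "p \<in> A \<times> {lo..hi}" using lo(2) hi(2) K(2) by (cases p) force
    qed
  qed
qed

lemma abs_loc_unif_series_times_greaterThanI:
  fixes f :: "nat \<Rightarrow> 'a::metric_space \<times> real \<Rightarrow> real"
  assumes "\<And>lo hi. t0 < lo \<Longrightarrow> lo \<le> hi \<Longrightarrow>
             \<exists>M. summable M \<and> (\<forall>n. \<forall>p\<in>A \<times> {lo..hi}. \<bar>f n p\<bar> \<le> M n)"
  shows "abs_loc_unif_series f (A \<times> {t0<..})"
proof (rule abs_loc_unif_seriesI)
  fix K assume "compact K" "K \<subseteq> A \<times> {t0<..}"
  then obtain lo hi where lo: "t0 < lo" "lo \<le> hi" and K: "K \<subseteq> A \<times> {lo..hi}"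
    by (rule compact_subset_times_greaterThan)
  obtain M where "summable M" "\<forall>n. \<forall>p\<in>A \<times> {lo..hi}. \<bar>f n p\<bar> \<le> M n"
    using assms[OF lo] by blast
  with K show "\<exists>M. summable M \<and> (\<forall>n. \<forall>p\<in>K. \<bar>f n p\<bar> \<le> M n)"
    by (intro exI[of _ M]) auto
qed

theorem mainTheorem10:
  fixes \<gamma> b t0 \<beta> :: real
  assumes "\<gamma> > 0" and "b \<ge> 0" and "\<beta> \<ge> 0"
  shows "abs_loc_unif_series (\<lambda>n (x3, t). bornW \<gamma> \<beta> t0 n x3 t) ({0..} \<times> {t0<..})
       \<and> abs_loc_unif_series (\<lambda>n (x, t). bornV \<gamma> b \<beta> t0 n x t)
            ({x :: real^3. x$3 \<ge> 0} \<times> {t0<..})"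
proof
  show "abs_loc_unif_series (\<lambda>n (x3, t). bornW \<gamma> \<beta> t0 n x3 t) ({0..} \<times> {t0<..})"
  proof (rule abs_loc_unif_series_times_greaterThanI)
    fix lo hi assume "t0 < lo" "lo \<le> hi"
    with assms show "\<exists>M. summable M \<and> (\<forall>n. \<forall>p\<in>{0..} \<times> {lo..hi}.
                       \<bar>case p of (x3, t) \<Rightarrow> bornW \<gamma> \<beta> t0 n x3 t\<bar> \<le> M n)"
      by (intro exI[of _ "bornW_majorant \<gamma> \<beta> t0 lo hi"] conjI summable_bornW_majorant allI ballI)
         (auto intro: abs_bornW_le_majorant)
  qed
  show "abs_loc_unif_series (\<lambda>n (x, t). bornV \<gamma> b \<beta> t0 n x t) ({x :: real^3. x$3 \<ge> 0} \<times> {t0<..})"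
  proof (rule abs_loc_unif_series_times_greaterThanI)
    fix lo hi assume "t0 < lo" "lo \<le> hi"
    with assms show "\<exists>M. summable M \<and> (\<forall>n. \<forall>p\<in>{x :: real^3. x$3 \<ge> 0} \<times> {lo..hi}.
                       \<bar>case p of (x, t) \<Rightarrow> bornV \<gamma> b \<beta> t0 n x t\<bar> \<le> M n)"
      by (intro exI[of _ "\<lambda>n. bornW_majorant \<gamma> \<beta> t0 lo hi n / (lo - t0)"] conjI
            summable_divide summable_bornW_majorant allI ballI)
         (auto intro: abs_bornV_le_majorant)
  qed
qed

end
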